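(* For any $n\ge 1$, the Hochschild lattice $(\mathsf{Tr}(n),\preccurlyeq)$ is constructible by interval doubling.
   Context: A triword of size $n$ is a word $u=u_1\cdots u_n$ with $u_i\in\{0,1,2\}$, $u_1\ne 2$, and such that $u_i=0$ implies $u_j\neq 1$ for all $j>i$; $\mathsf{Tr}(n)$ is their set, ordered componentwise ($u\preccurlyeq v$ iff $u_i\le v_i$ for all $i$). Let $\mathbf{2}=\{0<1\}$. For a poset $\mathcal{P}$ and an interval $I$ of $\mathcal{P}$, the interval doubling $\mathcal{P}[I]:=(\mathcal{P}\setminus I)\cup(I\times\mathbf{2})$ is ordered by: $x\preccurlyeq' y$ iff either $x,y\in\mathcal{P}\setminus I$ and $x\preccurlyeq y$; or $x\in\mathcal{P}\setminus I$, $y=(y',b)$ and $x\preccurlyeq y'$; or $x=(x',a)$, $y\in\mathcal{P}\setminus I$ and $x'\preccurlyeq y$; or $x=(x',a)$, $y=(y',b)$, $x'\preccurlyeq y'$ and $a\le b$. A lattice is constructible by interval doubling if it is isomorphic to a poset obtained from the one-element lattice by a finite sequence of interval doublings. *)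

theory Defs
  imports Main
begin

definition triwords :: "nat \<Rightarrow> nat list set" where
  "triwords n = {u. length u = n \<and> (\<forall>i<n. u ! i \<le> 2) \<and> (n > 0 \<longrightarrow> u ! 0 \<noteq> 2)
                   \<and> (\<forall>i j. i < j \<and> j < n \<and> u ! i = 0 \<longrightarrow> u ! j \<noteq> 1)}"

definition tr_le :: "nat list \<Rightarrow> nat list \<Rightarrow> bool" where
  "tr_le u v \<longleftrightarrow> length u = length v \<and> (\<forall>i<length u. u ! i \<le> v ! i)"

definition is_interval :: "'a set \<Rightarrow> ('a \<Rightarrow> 'a \<Rightarrow> bool) \<Rightarrow> 'a set \<Rightarrow> bool" where
  "is_interval P le I \<longleftrightarrow> (\<exists>a\<in>P. \<exists>b\<in>P. le a b \<and> I = {x\<in>P. le a x \<and> le x b})"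

text \<open>Interval doubling P[I] = (P - I) \<union> (I \<times> 2), with 2 = {False < True}.\<close>
definition dbl_carrier :: "'a set \<Rightarrow> 'a set \<Rightarrow> ('a + 'a \<times> bool) set" where
  "dbl_carrier P I = Inl ` (P - I) \<union> Inr ` (I \<times> UNIV)"

fun dbl_le :: "('a \<Rightarrow> 'a \<Rightarrow> bool) \<Rightarrow> ('a + 'a \<times> bool) \<Rightarrow> ('a + 'a \<times> bool) \<Rightarrow> bool" where
  "dbl_le le (Inl x) (Inl y) = le x y"
| "dbl_le le (Inl x) (Inr (y, b)) = le x y"
| "dbl_le le (Inr (x, a)) (Inl y) = le x y"
| "dbl_le le (Inr (x, a)) (Inr (y, b)) = (le x y \<and> (a \<longrightarrow> b))"

definition order_iso :: "'a set \<Rightarrow> ('a \<Rightarrow> 'a \<Rightarrow> bool) \<Rightarrow> 'b set \<Rightarrow> ('b \<Rightarrow> 'b \<Rightarrow> bool) \<Rightarrow> ('a \<Rightarrow> 'b) \<Rightarrow> bool" where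
  "order_iso A leA B leB f \<longleftrightarrow> bij_betw f A B \<and> (\<forall>x\<in>A. \<forall>y\<in>A. leA x y \<longleftrightarrow> leB (f x) (f y))"

inductive dbl_constr_nat :: "nat set \<Rightarrow> (nat \<Rightarrow> nat \<Rightarrow> bool) \<Rightarrow> bool" where
  base: "le x x \<Longrightarrow> dbl_constr_nat {x} le"
| step: "dbl_constr_nat P le \<Longrightarrow> is_interval P le I \<Longrightarrow>
         order_iso Q leQ (dbl_carrier P I) (dbl_le le) (f :: nat \<Rightarrow> nat + nat \<times> bool) \<Longrightarrow>
         dbl_constr_nat Q leQ"

definition constructible_by_doubling :: "'a set \<Rightarrow> ('a \<Rightarrow> 'a \<Rightarrow> bool) \<Rightarrow> bool" where
  "constructible_by_doubling A le \<longleftrightarrow>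
     (\<exists>B leB (f :: 'a \<Rightarrow> nat). dbl_constr_nat B leB \<and> order_iso A le B leB f)"

end

theory Submission
  imports Defs "HOL-Library.Countable"
begin

text \<open>\<open>Tr(1)\<close> is the two-element chain, the doubling of a point. For \<open>n \<ge> 1\<close> write a word
  of \<open>Tr(n+1)\<close> as \<open>v x\<close> with \<open>v \<in> Tr(n)\<close>, where the letter \<open>x = 1\<close> is allowed only for
  zero-free \<open>v\<close>. Then \<open>Tr(n+1) \<cong> (Tr(n) \<times> 2)[J]\<close>: \<open>Tr(n) \<times> 2\<close> is the doubling of \<open>Tr(n)\<close>
  along the whole lattice (the interval from \<open>0\<dots>0\<close> to \<open>12\<dots>2\<close>), and \<open>J\<close> consists of the
  zero-free words of the lower copy, the interval \<open>[1\<dots>1, 12\<dots>2]\<close>. The letter \<open>2\<close> goes to the upper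
  copy, the letter \<open>0\<close> after a word containing \<open>0\<close> to the lower copy, and the letters \<open>0\<close>, \<open>1\<close>
  after a zero-free word to the two copies of \<open>J\<close>. Constructibility by doubling is invariant
  under isomorphism, so induction on \<open>n\<close> concludes.\<close>

lemma order_isoI:
  assumes "\<And>x y. x \<in> A \<Longrightarrow> y \<in> A \<Longrightarrow> leA x y \<longleftrightarrow> leB (f x) (f y)"
    and "\<And>x. x \<in> A \<Longrightarrow> leA x x"
    and "\<And>x y. x \<in> A \<Longrightarrow> y \<in> A \<Longrightarrow> leA x y \<Longrightarrow> leA y x \<Longrightarrow> x = y"
    and "f ` A = B"
  shows "order_iso A leA B leB f"
proof -
  have "inj_on f A"
  proof (rule inj_onI)
    fix x y assume "x \<in> A" "y \<in> A" "f x = f y"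
    with assms(1-3) show "x = y" by metis
  qed
  with assms(1,4) show ?thesis unfolding order_iso_def bij_betw_def by blast
qed

lemma order_iso_comp:
  assumes "order_iso A leA B leB f" "order_iso B leB C leC g"
  shows "order_iso A leA C leC (g \<circ> f)"
proof -
  have f: "bij_betw f A B" "\<forall>x\<in>A. \<forall>y\<in>A. leA x y \<longleftrightarrow> leB (f x) (f y)"
    and g: "bij_betw g B C" "\<forall>x\<in>B. \<forall>y\<in>B. leB x y \<longleftrightarrow> leC (g x) (g y)"
    using assms unfolding order_iso_def by auto
  have "bij_betw (g \<circ> f) A C"
    using f(1) g(1) by (rule bij_betw_trans)
  moreover have "\<forall>x\<in>A. \<forall>y\<in>A. leA x y \<longleftrightarrow> leC ((g \<circ> f) x) ((g \<circ> f) y)"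
    using f g by (simp add: bij_betwE)
  ultimately show ?thesis unfolding order_iso_def ..
qed

lemma is_interval_order_iso:
  assumes "order_iso P le Q leQ f" "is_interval P le I"
  shows "is_interval Q leQ (f ` I)"
proof -
  obtain a b where ab: "a \<in> P" "b \<in> P" "le a b" and I: "I = {x \<in> P. le a x \<and> le x b}"
    using assms(2) unfolding is_interval_def by blast
  have f: "bij_betw f P Q" "\<And>x y. x \<in> P \<Longrightarrow> y \<in> P \<Longrightarrow> le x y \<longleftrightarrow> leQ (f x) (f y)"
    using assms(1) unfolding order_iso_def by auto
  then have "f ` I = {y \<in> Q. leQ (f a) y \<and> leQ y (f b)}"
    unfolding I using ab by (auto simp: bij_betw_def)
  with ab f show ?thesis unfolding is_interval_def by (metis bij_betwE)
qed

lemma order_iso_dbl: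
  assumes "order_iso P le Q leQ f" "I \<subseteq> P"
  shows "order_iso (dbl_carrier P I) (dbl_le le) (dbl_carrier Q (f ` I)) (dbl_le leQ)
           (map_sum f (map_prod f id))"
proof -
  have f: "inj_on f P" "f ` P = Q" "\<And>x y. x \<in> P \<Longrightarrow> y \<in> P \<Longrightarrow> le x y \<longleftrightarrow> leQ (f x) (f y)"
    using assms(1) unfolding order_iso_def bij_betw_def by auto
  have "map_sum f (map_prod f id) ` dbl_carrier P I = Inl ` f ` (P - I) \<union> Inr ` map_prod f id ` (I \<times> UNIV)"
    unfolding dbl_carrier_def by (simp add: image_Un image_image)
  also have "f ` (P - I) = Q - f ` I"
    using f assms(2) by (simp add: inj_on_image_set_diff)
  also have "map_prod f id ` (I \<times> UNIV) = f ` I \<times> UNIV"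
    by (simp add: map_prod_surj_on)
  finally have image: "map_sum f (map_prod f id) ` dbl_carrier P I = dbl_carrier Q (f ` I)"
    unfolding dbl_carrier_def .
  have "inj_on (map_sum f (map_prod f id)) (dbl_carrier P I)"
  proof (rule inj_onI)
    fix x y assume "x \<in> dbl_carrier P I" "y \<in> dbl_carrier P I"
      and "map_sum f (map_prod f id) x = map_sum f (map_prod f id) y"
    with assms(2) show "x = y"
      unfolding dbl_carrier_def by (cases x; cases y) (auto intro: inj_onD[OF f(1)])
  qed
  moreover have "dbl_le le x y \<longleftrightarrow> dbl_le leQ (map_sum f (map_prod f id) x) (map_sum f (map_prod f id) y)"
    if "x \<in> dbl_carrier P I" "y \<in> dbl_carrier P I" for x y
    using that assms(2) unfolding dbl_carrier_def by (cases x; cases y) (auto simp: f(3) subset_iff)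
  ultimately show ?thesis using image unfolding order_iso_def bij_betw_def by blast
qed

lemma constructible_by_doubling_order_iso:
  assumes "constructible_by_doubling Q leQ" "order_iso P le Q leQ f"
  shows "constructible_by_doubling P le"
  using assms order_iso_comp unfolding constructible_by_doubling_def by blast

lemma constructible_by_doubling_singleton:
  assumes "le x x"
  shows "constructible_by_doubling {x} le"
proof -
  have "dbl_constr_nat {0} (\<lambda>_ _. True)"
    by (rule dbl_constr_nat.base) simp
  moreover have "order_iso {x} le {0} (\<lambda>_ _. True) (\<lambda>_. 0)"
    using assms by (simp add: order_iso_def bij_betw_def)
  ultimately show ?thesis
    unfolding constructible_by_doubling_def by blast
qed

lemma dbl_constr_nat_double_constructible:
  assumes "dbl_constr_nat Q leQ" "is_interval Q leQ I"
  shows "constructible_by_doubling (dbl_carrier Q I) (dbl_le leQ)"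
proof -
  let ?D = "dbl_carrier Q I" and ?le = "\<lambda>x y. dbl_le leQ (from_nat x) (from_nat y)"
  have "order_iso (to_nat ` ?D) ?le ?D (dbl_le leQ) from_nat"
    unfolding order_iso_def bij_betw_def by (auto simp: inj_on_def image_image)
  with assms have "dbl_constr_nat (to_nat ` ?D) ?le"
    by (rule dbl_constr_nat.step)
  moreover have "order_iso ?D (dbl_le leQ) (to_nat ` ?D) ?le to_nat"
    unfolding order_iso_def bij_betw_def by simp
  ultimately show ?thesis unfolding constructible_by_doubling_def by blast
qed

lemma constructible_by_doubling_double:
  assumes "constructible_by_doubling P le" "is_interval P le I"
  shows "constructible_by_doubling (dbl_carrier P I) (dbl_le le)"
proof -
  obtain Q leQ f where Q: "dbl_constr_nat Q leQ" and f: "order_iso P le Q leQ f"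
    using assms(1) unfolding constructible_by_doubling_def by blast
  have "I \<subseteq> P" using assms(2) unfolding is_interval_def by blast
  with f have "order_iso (dbl_carrier P I) (dbl_le le) (dbl_carrier Q (f ` I)) (dbl_le leQ)
                 (map_sum f (map_prod f id))"
    by (rule order_iso_dbl)
  moreover have "constructible_by_doubling (dbl_carrier Q (f ` I)) (dbl_le leQ)"
    using Q is_interval_order_iso[OF f assms(2)] by (rule dbl_constr_nat_double_constructible)
  ultimately show ?thesis using constructible_by_doubling_order_iso by blast
qed

lemma tr_le_refl: "tr_le u u"
  by (simp add: tr_le_def)

lemma tr_le_antisym: "tr_le u v \<Longrightarrow> tr_le v u \<Longrightarrow> u = v"
  unfolding tr_le_def by (metis le_antisym nth_equalityI)

lemma tr_le_snoc: "length v = length v' \<Longrightarrow> tr_le (v @ [x]) (v' @ [x']) \<longleftrightarrow> tr_le v v' \<and> x \<le> x'"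
  unfolding tr_le_def by (auto simp: nth_append less_Suc_eq)

lemma tr_le_zero_free: "tr_le v v' \<Longrightarrow> 0 \<notin> set v \<Longrightarrow> 0 \<notin> set v'"
  unfolding tr_le_def by (metis in_set_conv_nth le_zero_eq)

lemma replicate_1_tr_le_iff: "length v = n \<Longrightarrow> tr_le (replicate n 1) v \<longleftrightarrow> 0 \<notin> set v"
  unfolding tr_le_def by (auto simp: in_set_conv_nth Suc_le_eq)

abbreviation triwords_top :: "nat \<Rightarrow> nat list" where
  "triwords_top n \<equiv> 1 # replicate (n - 1) 2"

abbreviation triword_extensions :: "nat \<Rightarrow> (nat list \<times> nat) set" where
  "triword_extensions n \<equiv> {(v, x). v \<in> triwords n \<and> x \<le> 2 \<and> (x = 1 \<longrightarrow> 0 \<notin> set v)}"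

abbreviation zero_free_lower :: "nat \<Rightarrow> (nat list + nat list \<times> bool) set" where
  "zero_free_lower n \<equiv> Inr ` ({v \<in> triwords n. 0 \<notin> set v} \<times> {False})"

lemma triwords_length: "u \<in> triwords n \<Longrightarrow> length u = n"
  by (simp add: triwords_def)

lemma triwords_snoc:
  assumes "1 \<le> n" "length v = n"
  shows "v @ [x] \<in> triwords (Suc n) \<longleftrightarrow> v \<in> triwords n \<and> x \<le> 2 \<and> (x = 1 \<longrightarrow> 0 \<notin> set v)"
proof -
  have bound: "(\<forall>i<Suc n. (v @ [x]) ! i \<le> 2) \<longleftrightarrow> (\<forall>i<n. v ! i \<le> 2) \<and> x \<le> 2"
    using assms(2) by (auto simp: All_less_Suc nth_append)
  have first: "(v @ [x]) ! 0 = v ! 0"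
    using assms by (simp add: nth_append)
  have no_01: "(\<forall>i j. i < j \<and> j < Suc n \<and> (v @ [x]) ! i = 0 \<longrightarrow> (v @ [x]) ! j \<noteq> 1) \<longleftrightarrow>
      (\<forall>i j. i < j \<and> j < n \<and> v ! i = 0 \<longrightarrow> v ! j \<noteq> 1) \<and> (x = 1 \<longrightarrow> 0 \<notin> set v)"
    using assms(2) by (fastforce simp: nth_append less_Suc_eq in_set_conv_nth)
  show ?thesis
    unfolding triwords_def using assms bound first no_01 by auto
qed

lemma triwords_Suc:
  assumes "1 \<le> n"
  shows "triwords (Suc n) = (\<lambda>(v, x). v @ [x]) ` triword_extensions n"
proof (intro set_eqI iffI)
  fix u assume u: "u \<in> triwords (Suc n)"
  then obtain v x where "u = v @ [x]" "length v = n"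
    using triwords_length by (metis length_Suc_conv_rev)
  with u show "u \<in> (\<lambda>(v, x). v @ [x]) ` triword_extensions n"
    using triwords_snoc[OF assms] by auto
next
  fix u assume "u \<in> (\<lambda>(v, x). v @ [x]) ` triword_extensions n"
  then show "u \<in> triwords (Suc n)"
    using triwords_snoc[OF assms] triwords_length by auto
qed

lemma triwords_1: "triwords 1 = {[0], [1]}"
  unfolding triwords_def by (auto simp: length_Suc_conv)

lemma replicate_0_in_triwords: "replicate n 0 \<in> triwords n"
  unfolding triwords_def by auto

lemma replicate_1_in_triwords: "replicate n 1 \<in> triwords n"
  unfolding triwords_def by auto

lemma triwords_top_in_triwords: "1 \<le> n \<Longrightarrow> triwords_top n \<in> triwords n"
  unfolding triwords_def by (auto simp: nth_Cons split: nat.splits)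

lemma replicate_0_tr_le: "u \<in> triwords n \<Longrightarrow> tr_le (replicate n 0) u"
  unfolding triwords_def tr_le_def by auto

lemma tr_le_triwords_top:
  assumes "1 \<le> n" "u \<in> triwords n"
  shows "tr_le u (triwords_top n)"
proof -
  have u: "\<forall>i<n. u ! i \<le> 2" "u ! 0 \<noteq> 2" "length u = n"
    using assms unfolding triwords_def by auto
  then have "u ! 0 \<le> 1" using assms(1) by force
  with u assms(1) show ?thesis unfolding tr_le_def by (auto simp: nth_Cons split: nat.splits)
qed

lemma is_interval_triwords: "1 \<le> n \<Longrightarrow> is_interval (triwords n) tr_le (triwords n)"
  unfolding is_interval_def
  using replicate_0_in_triwords triwords_top_in_triwords replicate_0_tr_le tr_le_triwords_top
  by blast

lemma is_interval_zero_free_lower: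
  assumes "1 \<le> n"
  shows "is_interval (dbl_carrier (triwords n) (triwords n)) (dbl_le tr_le) (zero_free_lower n)"
proof -
  have ones: "v \<in> triwords n \<Longrightarrow> tr_le (replicate n 1) v \<longleftrightarrow> 0 \<notin> set v" for v
    using replicate_1_tr_le_iff triwords_length by blast
  have "zero_free_lower n =
      {z \<in> dbl_carrier (triwords n) (triwords n).
         dbl_le tr_le (Inr (replicate n 1, False)) z \<and> dbl_le tr_le z (Inr (triwords_top n, False))}"
    (is "?J = ?I")
  proof (intro set_eqI iffI)
    fix z assume "z \<in> ?J"
    then obtain v where "z = Inr (v, False)" "v \<in> triwords n" "0 \<notin> set v" by blast
    with ones[of v] tr_le_triwords_top[OF assms, of v] show "z \<in> ?I"
      unfolding dbl_carrier_def by simp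
  next
    fix z assume "z \<in> ?I"
    then obtain v where "z = Inr (v, False)" "v \<in> triwords n" "tr_le (replicate n 1) v"
      unfolding dbl_carrier_def by auto
    with ones[of v] show "z \<in> ?J" by simp
  qed
  moreover have "Inr (replicate n 1, False) \<in> dbl_carrier (triwords n) (triwords n)"
    "Inr (triwords_top n, False) \<in> dbl_carrier (triwords n) (triwords n)"
    unfolding dbl_carrier_def using replicate_1_in_triwords triwords_top_in_triwords[OF assms] by auto
  moreover have "dbl_le tr_le (Inr (replicate n 1, False)) (Inr (triwords_top n, False))"
    using tr_le_triwords_top[OF assms replicate_1_in_triwords] by simp
  ultimately show ?thesis
    unfolding is_interval_def by blast
qed

definition triword_code ::
    "nat list \<Rightarrow> nat \<Rightarrow> (nat list + nat list \<times> bool) + (nat list + nat list \<times> bool) \<times> bool"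
  where "triword_code v x =
    (if x = 2 then Inl (Inr (v, True))
     else if x = 1 then Inr (Inr (v, False), True)
     else if 0 \<in> set v then Inl (Inr (v, False))
     else Inr (Inr (v, False), False))"

lemma triword_code_le_iff:
  assumes "length v = length v'" "x \<le> 2" "x' \<le> 2" "x = 1 \<longrightarrow> 0 \<notin> set v" "x' = 1 \<longrightarrow> 0 \<notin> set v'"
  shows "dbl_le (dbl_le tr_le) (triword_code v x) (triword_code v' x') \<longleftrightarrow> tr_le v v' \<and> x \<le> x'"
proof -
  have "x = 0 \<or> x = 1 \<or> x = 2" "x' = 0 \<or> x' = 1 \<or> x' = 2" using assms by auto
  then show ?thesis
    using assms tr_le_zero_free[of v v'] unfolding triword_code_def by auto
qed

lemma triword_code_image:
  "case_prod triword_code ` triword_extensions n =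
   dbl_carrier (dbl_carrier (triwords n) (triwords n)) (zero_free_lower n)"
  (is "?code = dbl_carrier ?D ?J")
proof
  show "?code \<subseteq> dbl_carrier ?D ?J"
  proof
    fix z assume "z \<in> ?code"
    then obtain v x where z: "z = triword_code v x" "v \<in> triwords n" "x \<le> 2" "x = 1 \<longrightarrow> 0 \<notin> set v"
      by auto
    then consider "x = 2" | "x = 1" | "x = 0" "0 \<in> set v" | "x = 0" "0 \<notin> set v" by linarith
    then show "z \<in> dbl_carrier ?D ?J"
      by cases (use z in \<open>simp_all add: triword_code_def dbl_carrier_def image_iff\<close>)
  qed
next
  have code: "triword_code v x \<in> ?code" if "v \<in> triwords n" "x \<le> 2" "x = 1 \<longrightarrow> 0 \<notin> set v" for v x
    using that by (intro image_eqI[of _ _ "(v, x)"]) auto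
  show "dbl_carrier ?D ?J \<subseteq> ?code"
  proof
    fix z assume "z \<in> dbl_carrier ?D ?J"
    then consider v c where "z = Inl (Inr (v, c))" "v \<in> triwords n" "c \<or> 0 \<in> set v"
      | v c where "z = Inr (Inr (v, False), c)" "v \<in> triwords n" "0 \<notin> set v"
      unfolding dbl_carrier_def by (auto simp: image_iff)
    then show "z \<in> ?code"
    proof cases
      case 1 then show ?thesis
        using code[of v 2] code[of v 0] by (cases c) (simp_all add: triword_code_def)
    next
      case 2 then show ?thesis
        using code[of v 1] code[of v 0] by (cases c) (simp_all add: triword_code_def)
    qed
  qed
qed

lemma triwords_Suc_order_iso:
  assumes "1 \<le> n"
  shows "order_iso (triwords (Suc n)) tr_le
    (dbl_carrier (dbl_carrier (triwords n) (triwords n)) (zero_free_lower n))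
    (dbl_le (dbl_le tr_le)) (\<lambda>u. triword_code (butlast u) (last u))"
proof (rule order_isoI)
  fix u u' assume "u \<in> triwords (Suc n)" "u' \<in> triwords (Suc n)"
  then obtain v x v' x' where "u = v @ [x]" "u' = v' @ [x']" "v \<in> triwords n" "v' \<in> triwords n"
    "x \<le> 2" "x' \<le> 2" "x = 1 \<longrightarrow> 0 \<notin> set v" "x' = 1 \<longrightarrow> 0 \<notin> set v'"
    unfolding triwords_Suc[OF assms] by auto
  then show "tr_le u u' \<longleftrightarrow>
      dbl_le (dbl_le tr_le) (triword_code (butlast u) (last u)) (triword_code (butlast u') (last u'))"
    using triword_code_le_iff tr_le_snoc triwords_length by simp
next
  show "(\<lambda>u. triword_code (butlast u) (last u)) ` triwords (Suc n) =
    dbl_carrier (dbl_carrier (triwords n) (triwords n)) (zero_free_lower n)"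
    unfolding triwords_Suc[OF assms] image_image triword_code_image[symmetric]
    by (rule image_cong) auto
qed (auto intro: tr_le_refl tr_le_antisym)

lemma constructible_triwords_1: "constructible_by_doubling (triwords 1) tr_le"
proof -
  have "constructible_by_doubling {[]} tr_le"
    by (rule constructible_by_doubling_singleton) (rule tr_le_refl)
  moreover have "is_interval {[]} tr_le {[]}"
    unfolding is_interval_def by (auto simp: tr_le_def)
  ultimately have "constructible_by_doubling (dbl_carrier {[]} {[]}) (dbl_le tr_le)"
    by (rule constructible_by_doubling_double)
  moreover have "order_iso {[0], [1]} tr_le (dbl_carrier {[]} {[]}) (dbl_le tr_le) (\<lambda>u. Inr ([], u = [1]))"
    by (rule order_isoI) (auto simp: tr_le_def dbl_carrier_def)
  ultimately show ?thesis
    unfolding triwords_1 by (rule constructible_by_doubling_order_iso)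
qed

lemma constructible_triwords_Suc:
  assumes "1 \<le> n" "constructible_by_doubling (triwords n) tr_le"
  shows "constructible_by_doubling (triwords (Suc n)) tr_le"
proof -
  have "constructible_by_doubling (dbl_carrier (triwords n) (triwords n)) (dbl_le tr_le)"
    using assms(2) is_interval_triwords[OF assms(1)] by (rule constructible_by_doubling_double)
  then have "constructible_by_doubling
      (dbl_carrier (dbl_carrier (triwords n) (triwords n)) (zero_free_lower n))
      (dbl_le (dbl_le tr_le))"
    using is_interval_zero_free_lower[OF assms(1)] by (rule constructible_by_doubling_double)
  then show ?thesis
    using triwords_Suc_order_iso[OF assms(1)] by (rule constructible_by_doubling_order_iso)
qed

theorem theorem2p3:
  fixes n :: nat
  assumes "n \<ge> 1"
  shows "constructible_by_doubling (triwords n) tr_le"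
  using assms
proof (induction n rule: dec_induct)
  case base
  show ?case by (rule constructible_triwords_1)
next
  case (step m)
  from step.hyps(1) step.IH show ?case by (rule constructible_triwords_Suc)
qed

end
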